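(* Let $n\geq 2$ and let $C$ be an all-ones CRC in $G_n$ with covering radius $\rho\geq 2$, $c_1=1$, $c_2=3$, $\mathbf{0}\in C$ and $-e_n\in C$. Then: (1) the intersection of any cap with the $0$-slice contains at most one word of $C$; in particular $C$ contains at most $2(n-1)$ words of type $3100$ lying in the $0$-slice; (2) every word $x$ of type $1100$ with $x_n=0$ lies in $C_2$ and is at distance two from exactly one word $y\in C$ of type $3100$ with $y_n=0$.
   Context: $G_n$: vertex set $\mathbb{Z}^n$, $x\sim y$ iff $\sum_i|x_i-y_i|=1$; $e_i$ the $i$-th unit vector. For a code $C$ with covering radius $\rho$, $C_i=\{v:d(v,C)=i\}$; $C$ is a CRC if for all $i,j$ every vertex of $C_i$ has the same number $\alpha_{ij}$ of neighbours in $C_j$, with $\alpha_{ij}=0$ for $|i-j|>1$; $a_i=\alpha_{ii}$, $c_i=\alpha_{i,i-1}$. $C$ is all-ones if $a_i=1$ for all $i$. The type of a word of weight at most four is the nonincreasing sequence of its four largest absolute entry values; type $1100$: exactly two entries $\pm1$, others $0$; type $3100$: one entry $\pm3$, one entry $\pm1$, others $0$. A cap is one of the sets $\{\varepsilon 3e_i\pm e_j: j\neq i\}$, $i\in\{1,\ldots,n\}$, $\varepsilon\in\{\pm1\}$. The $0$-slice is $\{x: x_n\in\{0,-1\}\}$. *)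

theory Defs
  imports Main
begin

text \<open>Vertices of G_n: functions nat => int supported on the coordinates 1..n.\<close>
definition vtx :: "nat \<Rightarrow> (nat \<Rightarrow> int) set" where
  "vtx n = {x. \<forall>i. (i = 0 \<or> n < i) \<longrightarrow> x i = 0}"

definition unitv :: "nat \<Rightarrow> nat \<Rightarrow> int" where
  "unitv i = (\<lambda>k. if k = i then 1 else 0)"

definition gdist :: "nat \<Rightarrow> (nat \<Rightarrow> int) \<Rightarrow> (nat \<Rightarrow> int) \<Rightarrow> nat" where
  "gdist n x y = nat (\<Sum>i=1..n. \<bar>x i - y i\<bar>)"

definition adj :: "nat \<Rightarrow> (nat \<Rightarrow> int) \<Rightarrow> (nat \<Rightarrow> int) \<Rightarrow> bool" where
  "adj n x y \<longleftrightarrow> gdist n x y = 1"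

definition dcode :: "nat \<Rightarrow> (nat \<Rightarrow> int) set \<Rightarrow> (nat \<Rightarrow> int) \<Rightarrow> nat" where
  "dcode n C v = (LEAST k. \<exists>c\<in>C. gdist n v c = k)"

definition covering_radius :: "nat \<Rightarrow> (nat \<Rightarrow> int) set \<Rightarrow> nat \<Rightarrow> bool" where
  "covering_radius n C \<rho> \<longleftrightarrow> (\<forall>v\<in>vtx n. dcode n C v \<le> \<rho>) \<and> (\<exists>v\<in>vtx n. dcode n C v = \<rho>)"

definition layer :: "nat \<Rightarrow> (nat \<Rightarrow> int) set \<Rightarrow> nat \<Rightarrow> (nat \<Rightarrow> int) set" where
  "layer n C i = {v \<in> vtx n. dcode n C v = i}"

definition CRC :: "nat \<Rightarrow> (nat \<Rightarrow> int) set \<Rightarrow> nat \<Rightarrow> (nat \<Rightarrow> nat \<Rightarrow> nat) \<Rightarrow> bool" where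
  "CRC n C \<rho> \<alpha> \<longleftrightarrow> C \<subseteq> vtx n \<and> C \<noteq> {} \<and> covering_radius n C \<rho> \<and>
     (\<forall>i\<le>\<rho>. \<forall>j\<le>\<rho>. \<forall>v\<in>layer n C i.
        card {w \<in> layer n C j. adj n v w} = \<alpha> i j) \<and>
     (\<forall>i\<le>\<rho>. \<forall>j\<le>\<rho>. (i + 1 < j \<or> j + 1 < i) \<longrightarrow> \<alpha> i j = 0)"

definition all_ones :: "nat \<Rightarrow> (nat \<Rightarrow> nat \<Rightarrow> nat) \<Rightarrow> bool" where
  "all_ones \<rho> \<alpha> \<longleftrightarrow> (\<forall>i\<le>\<rho>. \<alpha> i i = 1)"

definition type1100 :: "nat \<Rightarrow> (nat \<Rightarrow> int) \<Rightarrow> bool" where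
  "type1100 n x \<longleftrightarrow> x \<in> vtx n \<and>
     (\<exists>i j. 1 \<le> i \<and> i \<le> n \<and> 1 \<le> j \<and> j \<le> n \<and> i \<noteq> j \<and>
        \<bar>x i\<bar> = 1 \<and> \<bar>x j\<bar> = 1 \<and> (\<forall>k. k \<noteq> i \<and> k \<noteq> j \<longrightarrow> x k = 0))"

definition type3100 :: "nat \<Rightarrow> (nat \<Rightarrow> int) \<Rightarrow> bool" where
  "type3100 n x \<longleftrightarrow> x \<in> vtx n \<and>
     (\<exists>i j. 1 \<le> i \<and> i \<le> n \<and> 1 \<le> j \<and> j \<le> n \<and> i \<noteq> j \<and>
        \<bar>x i\<bar> = 3 \<and> \<bar>x j\<bar> = 1 \<and> (\<forall>k. k \<noteq> i \<and> k \<noteq> j \<longrightarrow> x k = 0))"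

definition cap :: "nat \<Rightarrow> nat \<Rightarrow> int \<Rightarrow> (nat \<Rightarrow> int) set" where
  "cap n i \<epsilon> = {(\<lambda>k. \<epsilon> * 3 * unitv i k + \<delta> * unitv j k) | j \<delta>.
                     1 \<le> j \<and> j \<le> n \<and> j \<noteq> i \<and> \<delta> \<in> {1, -1}}"

definition slice0 :: "nat \<Rightarrow> (nat \<Rightarrow> int) set" where
  "slice0 n = {x \<in> vtx n. x n \<in> {0, -1}}"

end

theory Submission
  imports Defs "HOL-Library.Function_Algebras"
begin

text \<open>
  All arguments count neighbours in the layers C_0 = C, C_1, C_2. Since a_0 = c_1 = 1, a vertex
  at distance at most one from C has exactly one neighbour in C; as 3 \<epsilon> e_i is adjacent to its whole
  cap, this gives (1). Since moreover a_1 = 1, a vertex of C_1 has one neighbour in C, one in C_1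
  and all others in C_2. Applied to the neighbours \<plusminus>e_i of 0 and \<plusminus>e_i - e_n of -e_n this puts every
  x = s e_i + t e_j (i, j < n) into C_2 and excludes the codewords 3 \<epsilon> e_p - e_n, so that a codeword
  of type 3100 in the 0-slice lies in a cap with i < n, whence the bound 2(n - 1).
  Since c_2 = 3, the vertex x has a third neighbour w in C_1 besides s e_i and t e_j, and the
  codeword next to w is at distance 2 from x. Any codeword y at distance 2 from x must be
  3 s e_i + t e_j or s e_i + 3 t e_j, because every other position of y produces a vertex of C_2
  that is adjacent to C or has four neighbours in C_1; for the latter reason these two words are
  not both in C.
\<close>

lemma fun_neq_at: "f a \<noteq> g a \<Longrightarrow> f \<noteq> g"
  by auto

lemma card_eq_1_imp_eq: "card A = 1 \<Longrightarrow> a \<in> A \<Longrightarrow> b \<in> A \<Longrightarrow> a = b"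
  by (metis card_1_singletonE singletonD)

subsection \<open>The grid graph G_n\<close>

definition unit_vec :: "nat \<Rightarrow> int \<Rightarrow> nat \<Rightarrow> int" where
  "unit_vec k d = (\<lambda>m. if m = k then d else 0)"

lemma unit_vec_apply [simp]: "unit_vec k d m = (if m = k then d else 0)"
  by (simp add: unit_vec_def)

lemma gdist_commute: "gdist n x y = gdist n y x"
  unfolding gdist_def by (simp add: abs_minus_commute)

lemma adj_commute: "adj n x y = adj n y x"
  unfolding adj_def by (simp add: gdist_commute)

lemma gdist_add_unit_vec:
  assumes "k \<in> {1..n}" shows "gdist n x (x + unit_vec k d) = nat \<bar>d\<bar>"
proof -
  have "(\<Sum>m=1..n. \<bar>x m - (x + unit_vec k d) m\<bar>) = (\<Sum>m=1..n. if m = k then \<bar>d\<bar> else 0)"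
    by (rule sum.cong) auto
  also have "\<dots> = \<bar>d\<bar>" using assms by simp
  finally show ?thesis unfolding gdist_def by simp
qed

lemma adj_add_unit_vecI:
  "y = x + unit_vec k d \<Longrightarrow> k \<in> {1..n} \<Longrightarrow> \<bar>d\<bar> = 1 \<Longrightarrow> adj n x y"
  unfolding adj_def by (simp add: gdist_add_unit_vec)

lemma vtx_add_unit_vec: "x \<in> vtx n \<Longrightarrow> k \<in> {1..n} \<Longrightarrow> x + unit_vec k d \<in> vtx n"
  unfolding vtx_def by auto

lemma unit_vec_in_vtx: "k \<in> {1..n} \<Longrightarrow> unit_vec k d \<in> vtx n"
  unfolding vtx_def by auto

lemma zero_in_vtx: "0 \<in> vtx n"
  unfolding vtx_def by auto

lemma vtx_differ_imp_index:
  assumes "x \<in> vtx n" "y \<in> vtx n" "x k \<noteq> y k" shows "k \<in> {1..n}"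
proof (rule ccontr)
  assume "k \<notin> {1..n}"
  then have "k = 0 \<or> n < k" by auto
  then have "x k = 0 \<and> y k = 0" using assms(1,2) unfolding vtx_def by blast
  then show False using assms(3) by simp
qed

lemma gdist_eq_0_imp_eq:
  assumes "x \<in> vtx n" "y \<in> vtx n" "gdist n x y = 0" shows "x = y"
proof (rule ext, rule ccontr)
  fix k assume k: "x k \<noteq> y k"
  then have "k \<in> {1..n}" using vtx_differ_imp_index assms by blast
  then have "\<bar>x k - y k\<bar> \<le> (\<Sum>i=1..n. \<bar>x i - y i\<bar>)"
    by (intro member_le_sum) auto
  then show False using k assms(3) unfolding gdist_def by simp
qed

lemma gdist_triangle: "gdist n x z \<le> gdist n x y + gdist n y z"
proof -
  have "(\<Sum>i=1..n. \<bar>x i - z i\<bar>) \<le> (\<Sum>i=1..n. \<bar>x i - y i\<bar>) + (\<Sum>i=1..n. \<bar>y i - z i\<bar>)"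
    unfolding sum.distrib[symmetric] by (rule sum_mono) simp
  moreover have "(\<Sum>i=1..n. \<bar>x i - y i\<bar>) \<ge> 0" "(\<Sum>i=1..n. \<bar>y i - z i\<bar>) \<ge> 0"
    by (simp_all add: sum_nonneg)
  ultimately show ?thesis unfolding gdist_def by linarith
qed

lemma gdist_step_towards:
  assumes "x \<in> vtx n" "y \<in> vtx n" "x k \<noteq> y k"
  shows "k \<in> {1..n}" "gdist n (x + unit_vec k (sgn (y k - x k))) y + 1 = gdist n x y"
proof -
  show kn: "k \<in> {1..n}" using vtx_differ_imp_index assms by blast
  let ?w = "x + unit_vec k (sgn (y k - x k))"
  have wk: "\<bar>?w k - y k\<bar> + 1 = \<bar>x k - y k\<bar>"
    using assms(3) by (cases "x k < y k") (auto simp: sgn_if)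
  have rest: "(\<Sum>i\<in>{1..n} - {k}. \<bar>?w i - y i\<bar>) = (\<Sum>i\<in>{1..n} - {k}. \<bar>x i - y i\<bar>)"
    by (rule sum.cong) auto
  have "(\<Sum>i=1..n. \<bar>?w i - y i\<bar>) + 1 = (\<Sum>i=1..n. \<bar>x i - y i\<bar>)"
    using kn wk rest by (simp add: sum.remove)
  moreover have "(\<Sum>i=1..n. \<bar>?w i - y i\<bar>) \<ge> 0" by (simp add: sum_nonneg)
  ultimately show "gdist n ?w y + 1 = gdist n x y" unfolding gdist_def by linarith
qed

lemma adj_imp_add_unit_vec:
  assumes "x \<in> vtx n" "y \<in> vtx n" "adj n x y"
  obtains k d where "k \<in> {1..n}" "\<bar>d\<bar> = 1" "y = x + unit_vec k d"
proof -
  have "x \<noteq> y" using assms(3) unfolding adj_def gdist_def by auto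
  then obtain k where k: "x k \<noteq> y k" by auto
  define w where "w = x + unit_vec k (sgn (y k - x k))"
  note step = gdist_step_towards[OF assms(1,2) k, folded w_def]
  have "w \<in> vtx n" unfolding w_def using assms(1) step(1) by (rule vtx_add_unit_vec)
  moreover have "gdist n w y = 0" using step(2) assms(3) unfolding adj_def by simp
  ultimately have "y = w" using gdist_eq_0_imp_eq assms(2) by blast
  moreover have "\<bar>sgn (y k - x k)\<bar> = 1" using k by (simp add: abs_sgn_eq)
  ultimately show thesis using that step(1) unfolding w_def by blast
qed

lemma gdist_2_imp_midpoint:
  assumes "x \<in> vtx n" "y \<in> vtx n" "gdist n x y = 2"
  obtains w where "w \<in> vtx n" "adj n x w" "adj n w y"
proof -
  have "x \<noteq> y" using assms(3) unfolding gdist_def by auto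
  then obtain k where k: "x k \<noteq> y k" by auto
  define w where "w = x + unit_vec k (sgn (y k - x k))"
  note step = gdist_step_towards[OF assms(1,2) k, folded w_def]
  show thesis
  proof (rule that)
    show "w \<in> vtx n" unfolding w_def using assms(1) step(1) by (rule vtx_add_unit_vec)
    show "adj n x w"
      using step(1) k unfolding w_def by (intro adj_add_unit_vecI) (auto simp: abs_sgn_eq)
    show "adj n w y" using step(2) assms(3) unfolding adj_def by simp
  qed
qed

lemma dcode_le_gdist: "c \<in> C \<Longrightarrow> dcode n C v \<le> gdist n v c"
  unfolding dcode_def by (rule Least_le) blast

lemma dcode_attained: "C \<noteq> {} \<Longrightarrow> \<exists>c\<in>C. gdist n v c = dcode n C v"
  unfolding dcode_def by (rule LeastI_ex) blast

lemma dcode_eq_0_iff: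
  assumes "C \<subseteq> vtx n" "v \<in> vtx n" "C \<noteq> {}" shows "dcode n C v = 0 \<longleftrightarrow> v \<in> C"
proof
  assume "v \<in> C" then show "dcode n C v = 0"
    using dcode_le_gdist[of v C n v] by (simp add: gdist_def)
next
  assume "dcode n C v = 0"
  then obtain c where "c \<in> C" "gdist n v c = 0" using dcode_attained assms(3) by metis
  then show "v \<in> C" using gdist_eq_0_imp_eq assms by blast
qed

lemma dcode_adj_le: assumes "C \<noteq> {}" "adj n v w" shows "dcode n C v \<le> dcode n C w + 1"
proof -
  obtain c where c: "c \<in> C" "gdist n w c = dcode n C w" using dcode_attained assms(1) by blast
  have "dcode n C v \<le> gdist n v c" using dcode_le_gdist c(1) .
  also have "\<dots> \<le> gdist n v w + gdist n w c" by (rule gdist_triangle)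
  finally show ?thesis using assms(2) c(2) unfolding adj_def by simp
qed

lemma layerI: "v \<in> vtx n \<Longrightarrow> dcode n C v = k \<Longrightarrow> v \<in> layer n C k"
  unfolding layer_def by auto

lemma layerD: "v \<in> layer n C k \<Longrightarrow> v \<in> vtx n \<and> dcode n C v = k"
  unfolding layer_def by auto

subsection \<open>Completely regular codes with a_i = 1, c_1 = 1, c_2 = 3\<close>

locale all_ones_crc =
  fixes n \<rho> :: nat and C :: "(nat \<Rightarrow> int) set" and \<alpha> :: "nat \<Rightarrow> nat \<Rightarrow> nat"
  assumes crc: "CRC n C \<rho> \<alpha>"
    and all_ones: "all_ones \<rho> \<alpha>"
    and radius_ge_2: "\<rho> \<ge> 2"
    and c1: "\<alpha> 1 0 = 1"
    and c2: "\<alpha> 2 1 = 3"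
begin

lemma code_subset_vtx: "C \<subseteq> vtx n"
  using crc unfolding CRC_def by blast

lemma code_nonempty: "C \<noteq> {}"
  using crc unfolding CRC_def by blast

lemma dcode_eq_0_iff_code: "v \<in> vtx n \<Longrightarrow> dcode n C v = 0 \<longleftrightarrow> v \<in> C"
  using dcode_eq_0_iff[OF code_subset_vtx _ code_nonempty] by blast

lemma layer_0: "layer n C 0 = C"
  using dcode_eq_0_iff_code code_subset_vtx unfolding layer_def by blast

lemma card_layer_neighbours:
  "i \<le> \<rho> \<Longrightarrow> j \<le> \<rho> \<Longrightarrow> v \<in> layer n C i \<Longrightarrow> card {w \<in> layer n C j. adj n v w} = \<alpha> i j"
  using crc unfolding CRC_def by blast

lemma code_neighbour_unique:
  assumes "y1 \<in> C" "y2 \<in> C" "m \<in> vtx n" "adj n m y1" "adj n m y2" shows "y1 = y2"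
proof -
  have "dcode n C m \<le> 1"
    using dcode_le_gdist[OF assms(1), of n m] assms(4) unfolding adj_def by simp
  then have "card {w \<in> layer n C 0. adj n m w} = 1"
  proof (cases "dcode n C m")
    case 0
    then show ?thesis
      using card_layer_neighbours[of 0 0 m] layerI[where C = C, OF assms(3)] all_ones
      unfolding all_ones_def by simp
  next
    case Suc
    then have "m \<in> layer n C 1" using \<open>dcode n C m \<le> 1\<close> layerI[where C = C, OF assms(3)] by simp
    then show ?thesis using card_layer_neighbours[of 1 0 m] c1 radius_ge_2 by simp
  qed
  then show ?thesis by (rule card_eq_1_imp_eq) (use assms layer_0 in auto)
qed

lemma layer_1I: assumes "v \<in> vtx n" "v \<notin> C" "c \<in> C" "adj n v c" shows "v \<in> layer n C 1"
proof -
  have "dcode n C v \<le> 1"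
    using dcode_le_gdist[OF assms(3), of n v] assms(4) unfolding adj_def by simp
  moreover have "dcode n C v \<noteq> 0" using dcode_eq_0_iff_code[OF assms(1)] assms(2) by simp
  ultimately show ?thesis using assms(1) by (intro layerI) auto
qed

lemma layer_1_code_neighbour:
  assumes "v \<in> layer n C 1" obtains y where "y \<in> C" "adj n v y"
proof -
  have "card {y \<in> layer n C 0. adj n v y} = 1"
    using card_layer_neighbours[of 1 0 v] assms c1 radius_ge_2 by simp
  then obtain y where "{y \<in> layer n C 0. adj n v y} = {y}" by (rule card_1_singletonE)
  then show thesis using that layer_0 by blast
qed

lemma layer_1_neighbour_unique:
  assumes "a \<in> layer n C 1" "b \<in> layer n C 1" "v \<in> layer n C 1" "adj n a b" "adj n a v"
  shows "v = b"
proof -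
  have "card {w \<in> layer n C 1. adj n a w} = 1"
    using card_layer_neighbours[of 1 1 a] assms(1) all_ones radius_ge_2 unfolding all_ones_def
    by simp
  then show ?thesis by (rule card_eq_1_imp_eq) (use assms in auto)
qed

lemma layer_1_other_neighbour_in_layer_2:
  assumes "a \<in> layer n C 1" "b \<in> layer n C 1" "adj n a b" "c \<in> C" "adj n a c"
    and "v \<in> vtx n" "adj n a v" "v \<noteq> b" "v \<noteq> c"
  shows "v \<in> layer n C 2"
proof -
  have a: "a \<in> vtx n" "dcode n C a = 1" using layerD[OF assms(1)] by auto
  have "v \<notin> C" using code_neighbour_unique[of v c a] assms a by blast
  then have "dcode n C v \<noteq> 0" using dcode_eq_0_iff_code[OF assms(6)] by simp
  moreover have "dcode n C v \<noteq> 1"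
    using layerI[where C = C, OF assms(6)] layer_1_neighbour_unique[OF assms(1,2) _ assms(3,7)]
      assms(8)
    by blast
  moreover have "dcode n C v \<le> dcode n C a + 1"
    using dcode_adj_le[OF code_nonempty] assms(7) adj_commute by blast
  ultimately show ?thesis using a assms(6) by (intro layerI) auto
qed

lemma code_midpoint_in_layer_1:
  assumes "x \<in> layer n C 2" "y \<in> C" "m \<in> vtx n" "adj n m x" "adj n m y"
  shows "m \<in> layer n C 1"
proof -
  have "dcode n C m \<le> 1"
    using dcode_le_gdist[OF assms(2), of n m] assms(5) unfolding adj_def by simp
  moreover have "dcode n C x \<le> dcode n C m + 1"
    using dcode_adj_le[OF code_nonempty] assms(4) adj_commute by blast
  ultimately show ?thesis using layerD[OF assms(1)] assms(3) by (intro layerI) auto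
qed

lemma layer_2_not_adj_code: assumes "v \<in> layer n C 2" "y \<in> C" shows "\<not> adj n v y"
proof
  assume "adj n v y"
  then have "dcode n C v \<le> dcode n C y + 1" using dcode_adj_le[OF code_nonempty] by blast
  moreover have "dcode n C y = 0" using dcode_eq_0_iff_code assms(2) code_subset_vtx by blast
  ultimately show False using layerD[OF assms(1)] by simp
qed

lemma layer_2_no_four_layer_1_neighbours:
  assumes "v \<in> layer n C 2"
    and "a \<in> layer n C 1" "b \<in> layer n C 1" "c \<in> layer n C 1" "d \<in> layer n C 1"
    and "adj n v a" "adj n v b" "adj n v c" "adj n v d"
    and "a \<noteq> b" "a \<noteq> c" "a \<noteq> d" "b \<noteq> c" "b \<noteq> d" "c \<noteq> d"
  shows False
proof -
  let ?A = "{w \<in> layer n C 1. adj n v w}"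
  have card_A: "card ?A = 3" using card_layer_neighbours[of 2 1 v] assms(1) c2 radius_ge_2 by simp
  then have "finite ?A" by (intro card_ge_0_finite) simp
  moreover have "{a, b, c, d} \<subseteq> ?A" using assms by auto
  ultimately have "card {a, b, c, d} \<le> card ?A" by (rule card_mono)
  moreover have "card {a, b, c, d} = 4" using assms(10-15) by simp
  ultimately show False using card_A by simp
qed

lemma layer_2_third_layer_1_neighbour:
  assumes "v \<in> layer n C 2"
  obtains w where "w \<in> layer n C 1" "adj n v w" "w \<noteq> a" "w \<noteq> b"
proof -
  let ?A = "{w \<in> layer n C 1. adj n v w}"
  have "card ?A = 3" using card_layer_neighbours[of 2 1 v] assms c2 radius_ge_2 by simp
  moreover have "card (?A \<inter> {a, b}) \<le> card {a, b}" by (rule card_mono) auto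
  moreover have "card {a, b} \<le> 2" by (simp add: card_insert_if)
  ultimately have "?A \<noteq> ?A \<inter> {a, b}" by auto
  then obtain w where "w \<in> ?A" "w \<notin> {a, b}" by blast
  then show thesis using that by blast
qed

lemma card_code_inter_cap_le_1:
  assumes "i \<in> {1..n}" shows "card (C \<inter> cap n i \<epsilon>) \<le> 1"
proof -
  have "adj n (unit_vec i (3 * \<epsilon>)) a" if a: "a \<in> cap n i \<epsilon>" for a
  proof -
    obtain j \<delta> where "a = (\<lambda>k. \<epsilon> * 3 * unitv i k + \<delta> * unitv j k)"
      and "1 \<le> j" "j \<le> n" "j \<noteq> i" "\<delta> \<in> {1, -1}"
      using a unfolding cap_def by blast
    then show ?thesis
      by (intro adj_add_unit_vecI[of _ _ j \<delta>]) (auto simp: fun_eq_iff unitv_def)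
  qed
  then have eq: "\<forall>a\<in>C \<inter> cap n i \<epsilon>. \<forall>b\<in>C \<inter> cap n i \<epsilon>. a = b"
    using code_neighbour_unique[OF _ _ unit_vec_in_vtx[OF assms]] by blast
  show ?thesis
  proof (cases "finite (C \<inter> cap n i \<epsilon>)")
    case True
    then have "card (C \<inter> cap n i \<epsilon>) \<le> Suc 0" using card_le_Suc0_iff_eq eq by blast
    then show ?thesis by simp
  qed simp
qed

end

lemma type1100_unit_vec_sum:
  assumes "type1100 n x"
  obtains i j s t where "i \<in> {1..n}" "j \<in> {1..n}" "i \<noteq> j" "\<bar>s\<bar> = 1" "\<bar>t\<bar> = 1"
    "x = unit_vec i s + unit_vec j t"
proof -
  obtain i j where ij: "1 \<le> i" "i \<le> n" "1 \<le> j" "j \<le> n" "i \<noteq> j" "\<bar>x i\<bar> = 1" "\<bar>x j\<bar> = 1"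
    and zero: "\<And>k. k \<noteq> i \<and> k \<noteq> j \<Longrightarrow> x k = 0"
    using assms unfolding type1100_def by blast
  have "x = unit_vec i (x i) + unit_vec j (x j)"
    by (rule ext) (use zero ij(5) in auto)
  with ij show thesis using that by simp
qed

lemma type3100_unit_vec_sum:
  assumes "type3100 n x"
  obtains i j a b where "i \<in> {1..n}" "j \<in> {1..n}" "i \<noteq> j" "\<bar>a\<bar> = 3" "\<bar>b\<bar> = 1"
    "x = unit_vec i a + unit_vec j b"
proof -
  obtain i j where ij: "1 \<le> i" "i \<le> n" "1 \<le> j" "j \<le> n" "i \<noteq> j" "\<bar>x i\<bar> = 3" "\<bar>x j\<bar> = 1"
    and zero: "\<And>k. k \<noteq> i \<and> k \<noteq> j \<Longrightarrow> x k = 0"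
    using assms unfolding type3100_def by blast
  have "x = unit_vec i (x i) + unit_vec j (x j)"
    by (rule ext) (use zero ij(5) in auto)
  with ij show thesis using that by simp
qed

lemma type3100_unit_vec_sumI:
  assumes "i \<in> {1..n}" "j \<in> {1..n}" "i \<noteq> j" "\<bar>a\<bar> = 3" "\<bar>b\<bar> = 1"
  shows "type3100 n (unit_vec i a + unit_vec j b)"
  unfolding type3100_def
proof (intro conjI exI)
  show "unit_vec i a + unit_vec j b \<in> vtx n"
    using assms(1,2) by (intro vtx_add_unit_vec unit_vec_in_vtx)
qed (use assms in auto)

lemma unit_vec_sum_in_cap:
  assumes "j \<in> {1..n}" "j \<noteq> i" "\<epsilon> \<in> {1, -1}" "\<bar>\<delta>\<bar> = 1"
  shows "unit_vec i (3 * \<epsilon>) + unit_vec j \<delta> \<in> cap n i \<epsilon>"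
  unfolding cap_def
proof (intro CollectI exI conjI)
  show "unit_vec i (3 * \<epsilon>) + unit_vec j \<delta> = (\<lambda>k. \<epsilon> * 3 * unitv i k + \<delta> * unitv j k)"
    by (auto simp: fun_eq_iff unitv_def)
qed (use assms in auto)

lemma finite_cap: "finite (cap n i \<epsilon>)"
proof -
  have "cap n i \<epsilon> \<subseteq> (\<lambda>(j, \<delta>). (\<lambda>k. \<epsilon> * 3 * unitv i k + \<delta> * unitv j k)) ` ({1..n} \<times> {1, -1})"
    unfolding cap_def by auto
  then show ?thesis by (rule finite_subset) simp
qed

subsection \<open>Codes containing 0 and -e_n\<close>

locale all_ones_crc_at_origin = all_ones_crc +
  assumes zero_in_code: "0 \<in> C"
    and minus_en_in_code: "unit_vec n (-1) \<in> C"
begin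

lemma n_index: "n \<in> {1..n}"
  using vtx_differ_imp_index[OF _ zero_in_vtx] minus_en_in_code code_subset_vtx by fastforce

lemma unit_vec_in_layer_1:
  assumes "k \<in> {1..n}" "\<bar>s\<bar> = 1" "\<not> (k = n \<and> s = -1)"
  shows "unit_vec k s \<in> layer n C 1"
proof (rule layer_1I[OF unit_vec_in_vtx[OF assms(1)] _ zero_in_code])
  have adj_s: "adj n 0 (unit_vec k s)" by (rule adj_add_unit_vecI) (use assms in auto)
  show "adj n (unit_vec k s) 0" using adj_s adj_commute by blast
  have "adj n 0 (unit_vec n (-1))" by (rule adj_add_unit_vecI) (use n_index in auto)
  then have "unit_vec k s \<noteq> unit_vec n (-1)"
    by (intro fun_neq_at[of _ k]) (use assms in auto)
  then show "unit_vec k s \<notin> C"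
    using code_neighbour_unique[OF _ minus_en_in_code zero_in_vtx adj_s] adj_s
      \<open>adj n 0 (unit_vec n (-1))\<close> by blast
qed

lemma unit_vec_code_neighbour:
  assumes "k \<in> {1..n}" "\<bar>s\<bar> = 1" "y \<in> C" "adj n (unit_vec k s) y" shows "y = 0"
proof -
  have "adj n (unit_vec k s) 0"
    using adj_add_unit_vecI[of "unit_vec k s" 0 k s] assms(1,2) adj_commute by auto
  then show ?thesis
    using code_neighbour_unique[OF assms(3) zero_in_code unit_vec_in_vtx[OF assms(1)] assms(4)]
    by blast
qed

lemma unit_vec_minus_en_in_layer_1:
  assumes "1 \<le> i" "i < n" "\<bar>s\<bar> = 1"
  shows "unit_vec i s + unit_vec n (-1) \<in> layer n C 1"
proof (rule layer_1I[OF _ _ minus_en_in_code])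
  have i: "i \<in> {1..n}" using assms by auto
  show "unit_vec i s + unit_vec n (-1) \<in> vtx n"
    using i n_index by (intro vtx_add_unit_vec unit_vec_in_vtx)
  have adj_en: "adj n (unit_vec n (-1)) (unit_vec i s + unit_vec n (-1))"
    by (rule adj_add_unit_vecI[of _ _ i s]) (use assms i in \<open>auto simp: add.commute\<close>)
  then show "adj n (unit_vec i s + unit_vec n (-1)) (unit_vec n (-1))"
    using adj_commute by blast
  have "adj n (unit_vec n (-1)) 0"
    by (rule adj_add_unit_vecI[of _ _ n 1]) (use n_index in \<open>auto simp: fun_eq_iff\<close>)
  moreover have "unit_vec i s + unit_vec n (-1) \<noteq> 0"
    by (rule fun_neq_at[of _ i]) (use assms in auto)
  ultimately show "unit_vec i s + unit_vec n (-1) \<notin> C"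
    using code_neighbour_unique[OF _ zero_in_code unit_vec_in_vtx[OF n_index] adj_en] by blast
qed

text \<open>The C_1-vertex s e_i has its code neighbour 0 and its C_1-neighbour s e_i - e_n.\<close>
lemma unit_vec_neighbour_in_layer_2:
  assumes "1 \<le> i" "i < n" "\<bar>s\<bar> = 1" "v \<in> vtx n" "adj n (unit_vec i s) v"
    and "v \<noteq> 0" "v \<noteq> unit_vec i s + unit_vec n (-1)"
  shows "v \<in> layer n C 2"
proof (rule layer_1_other_neighbour_in_layer_2[OF _ unit_vec_minus_en_in_layer_1[OF assms(1-3)]
      _ zero_in_code _ assms(4,5,7,6)])
  have i: "i \<in> {1..n}" using assms by auto
  show "unit_vec i s \<in> layer n C 1" by (rule unit_vec_in_layer_1) (use assms i in auto)
  show "adj n (unit_vec i s) (unit_vec i s + unit_vec n (-1))"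
    by (rule adj_add_unit_vecI) (use n_index in auto)
  show "adj n (unit_vec i s) 0"
    using adj_add_unit_vecI[of "unit_vec i s" 0 i s] i assms(3) adj_commute by auto
qed

lemma unit_vec_minus_en_neighbour_in_layer_2:
  assumes "1 \<le> i" "i < n" "\<bar>s\<bar> = 1" "v \<in> vtx n" "adj n (unit_vec i s + unit_vec n (-1)) v"
    and "v \<noteq> unit_vec n (-1)" "v \<noteq> unit_vec i s"
  shows "v \<in> layer n C 2"
proof (rule layer_1_other_neighbour_in_layer_2[OF unit_vec_minus_en_in_layer_1[OF assms(1-3)]
      _ _ minus_en_in_code _ assms(4,5,7,6)])
  have i: "i \<in> {1..n}" using assms by auto
  show "unit_vec i s \<in> layer n C 1" by (rule unit_vec_in_layer_1) (use assms i in auto)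
  show "adj n (unit_vec i s + unit_vec n (-1)) (unit_vec i s)"
    by (rule adj_add_unit_vecI[of _ _ n 1]) (use n_index in \<open>auto simp: fun_eq_iff\<close>)
  show "adj n (unit_vec i s + unit_vec n (-1)) (unit_vec n (-1))"
    by (rule adj_add_unit_vecI[of _ _ i "-s"]) (use i assms(3) in \<open>auto simp: fun_eq_iff\<close>)
qed

lemma unit_vec_sum_in_layer_2:
  assumes i: "1 \<le> i" "i < n" and s: "\<bar>s\<bar> = 1" and k: "k \<in> {1..n}" "k \<noteq> i" and \<sigma>: "\<bar>\<sigma>\<bar> = 1"
    and not_minus_en: "\<not> (k = n \<and> \<sigma> = -1)"
  shows "unit_vec i s + unit_vec k \<sigma> \<in> layer n C 2"
proof (rule unit_vec_neighbour_in_layer_2[OF i s])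
  have "i \<in> {1..n}" using i by simp
  then show "unit_vec i s + unit_vec k \<sigma> \<in> vtx n"
    using k(1) by (intro vtx_add_unit_vec unit_vec_in_vtx)
  show "adj n (unit_vec i s) (unit_vec i s + unit_vec k \<sigma>)"
    by (rule adj_add_unit_vecI[OF refl k(1) \<sigma>])
  show "unit_vec i s + unit_vec k \<sigma> \<noteq> 0" by (rule fun_neq_at[of _ i]) (use k s in auto)
  show "unit_vec i s + unit_vec k \<sigma> \<noteq> unit_vec i s + unit_vec n (-1)"
  proof (cases "k = n")
    case True then show ?thesis
      using not_minus_en by (intro fun_neq_at[of _ n]) (use i in auto)
  next
    case False then show ?thesis
      by (intro fun_neq_at[of _ k]) (use k \<sigma> in auto)
  qed
qed

context
  fixes i j :: nat and s t :: int and x :: "nat \<Rightarrow> int"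
  assumes i: "1 \<le> i" "i < n" and j: "1 \<le> j" "j < n" and i_neq_j: "i \<noteq> j"
    and s: "\<bar>s\<bar> = 1" and t: "\<bar>t\<bar> = 1"
    and x_eq: "x = unit_vec i s + unit_vec j t"
begin

lemma i_index: "i \<in> {1..n}" and j_index: "j \<in> {1..n}"
  using i j by auto

lemma weight_two_in_vtx: "x \<in> vtx n"
  unfolding x_eq using i_index j_index by (intro vtx_add_unit_vec unit_vec_in_vtx)

lemma adj_weight_two_unit_vecs: "adj n x (unit_vec i s)" "adj n x (unit_vec j t)"
proof -
  show "adj n x (unit_vec i s)"
    by (rule adj_add_unit_vecI[of _ _ j "-t"]) (use j_index t x_eq in \<open>auto simp: fun_eq_iff\<close>)
  show "adj n x (unit_vec j t)"
    by (rule adj_add_unit_vecI[of _ _ i "-s"]) (use i_index s x_eq in \<open>auto simp: fun_eq_iff\<close>)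
qed

lemma unit_vecs_in_layer_1: "unit_vec i s \<in> layer n C 1" "unit_vec j t \<in> layer n C 1"
  using unit_vec_in_layer_1 i_index j_index s t i j by auto

lemma unit_vecs_distinct: "unit_vec i s \<noteq> unit_vec j t"
  by (rule fun_neq_at[of _ i]) (use i_neq_j s in auto)

lemma weight_two_in_layer_2: "x \<in> layer n C 2"
  unfolding x_eq using i_neq_j j by (intro unit_vec_sum_in_layer_2[OF i s j_index _ t]) auto

lemma weight_two_not_in_code: "x \<notin> C"
  using weight_two_in_layer_2 layerD dcode_eq_0_iff_code by fastforce

text \<open>If the last step y = w + e_l turned, x + e_l would be a fourth C_1-neighbour of x.\<close>
lemma code_word_beyond_third_neighbour_same_axis:
  assumes "y \<in> C" and k: "k \<in> {1..n}" "\<bar>\<sigma>\<bar> = 1" and l: "l \<in> {1..n}" "\<bar>\<tau>\<bar> = 1"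
    and w_eq: "w = x + unit_vec k \<sigma>" and y_eq: "y = w + unit_vec l \<tau>"
    and "w \<noteq> unit_vec i s" "w \<noteq> unit_vec j t"
  shows "l = k"
proof (rule ccontr)
  assume "l \<noteq> k"
  define m where "m = x + unit_vec l \<tau>"
  have adj_x_w: "adj n x w" by (rule adj_add_unit_vecI[OF w_eq k])
  have y_via_m: "y = m + unit_vec k \<sigma>" unfolding y_eq w_eq m_def by (simp add: algebra_simps)
  have adj_x_m: "adj n x m" by (rule adj_add_unit_vecI[OF m_def l])
  have adj_m_y: "adj n m y" by (rule adj_add_unit_vecI[OF y_via_m k])
  have w_layer: "w \<in> layer n C 1"
    using code_midpoint_in_layer_1[OF weight_two_in_layer_2 assms(1)] adj_x_w adj_commute
      adj_add_unit_vecI[OF y_eq l] vtx_add_unit_vec[OF weight_two_in_vtx k(1)] w_eq by blast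
  have m_layer: "m \<in> layer n C 1"
    using code_midpoint_in_layer_1[OF weight_two_in_layer_2 assms(1) _ _ adj_m_y] adj_x_m
      adj_commute vtx_add_unit_vec[OF weight_two_in_vtx l(1)] m_def by blast
  have "m \<noteq> w" by (rule fun_neq_at[of _ k]) (use \<open>l \<noteq> k\<close> k m_def w_eq in auto)
  moreover have "m \<noteq> unit_vec i s"
  proof
    assume m_eq: "m = unit_vec i s"
    then have "y = 0" using unit_vec_code_neighbour[OF i_index s assms(1)] adj_m_y by blast
    then have "unit_vec k \<sigma> = - unit_vec i s" using y_via_m m_eq by (simp add: add_eq_0_iff)
    then show False using assms(9) unfolding w_eq x_eq by (simp add: algebra_simps)
  qed
  moreover have "m \<noteq> unit_vec j t"
  proof
    assume m_eq: "m = unit_vec j t"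
    then have "y = 0" using unit_vec_code_neighbour[OF j_index t assms(1)] adj_m_y by blast
    then have "unit_vec k \<sigma> = - unit_vec j t" using y_via_m m_eq by (simp add: add_eq_0_iff)
    then show False using assms(8) unfolding w_eq x_eq by (simp add: algebra_simps)
  qed
  ultimately show False
    using layer_2_no_four_layer_1_neighbours[OF weight_two_in_layer_2 unit_vecs_in_layer_1
        w_layer m_layer adj_weight_two_unit_vecs adj_x_w adj_x_m unit_vecs_distinct]
      assms(8,9) by metis
qed

lemma code_word_beyond_third_neighbour_straight:
  assumes "y \<in> C" "w \<in> vtx n" "adj n x w" "adj n w y"
    and "w \<noteq> unit_vec i s" "w \<noteq> unit_vec j t"
  obtains k \<sigma> where "k \<in> {1..n}" "\<bar>\<sigma>\<bar> = 1" "w = x + unit_vec k \<sigma>" "y = x + unit_vec k (2 * \<sigma>)"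
proof -
  obtain k \<sigma> where k: "k \<in> {1..n}" "\<bar>\<sigma>\<bar> = 1" and w_eq: "w = x + unit_vec k \<sigma>"
    using adj_imp_add_unit_vec[OF weight_two_in_vtx assms(2,3)] by blast
  obtain l \<tau> where l: "l \<in> {1..n}" "\<bar>\<tau>\<bar> = 1" and y_eq: "y = w + unit_vec l \<tau>"
    using adj_imp_add_unit_vec[OF assms(2) _ assms(4)] assms(1) code_subset_vtx by blast
  have "l = k"
    by (rule code_word_beyond_third_neighbour_same_axis[OF assms(1) k l w_eq y_eq assms(5,6)])
  moreover have "\<tau> = \<sigma>"
  proof (rule ccontr)
    assume "\<tau> \<noteq> \<sigma>"
    then have "\<tau> = - \<sigma>" using k(2) l(2) by auto
    then have "y = x" unfolding y_eq w_eq using \<open>l = k\<close> by (auto simp: fun_eq_iff)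
    then show False using assms(1) weight_two_not_in_code by simp
  qed
  ultimately have "y = x + unit_vec k (2 * \<sigma>)" unfolding y_eq w_eq by (auto simp: fun_eq_iff)
  then show thesis using that k w_eq by blast
qed

lemma minus_en_extension_not_in_code: "x + unit_vec n (-2) \<notin> C"
proof
  assume code: "x + unit_vec n (-2) \<in> C"
  define v where "v = unit_vec i s + unit_vec n (-2)"
  have "v \<in> layer n C 2"
  proof (rule unit_vec_minus_en_neighbour_in_layer_2[OF i s])
    show "v \<in> vtx n" unfolding v_def
      using i_index n_index by (intro vtx_add_unit_vec unit_vec_in_vtx)
    show "adj n (unit_vec i s + unit_vec n (-1)) v"
      by (rule adj_add_unit_vecI[of _ _ n "-1"]) (use n_index v_def in \<open>auto simp: fun_eq_iff\<close>)
    show "v \<noteq> unit_vec n (-1)" by (rule fun_neq_at[of _ i]) (use i s v_def in auto)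
    show "v \<noteq> unit_vec i s" by (rule fun_neq_at[of _ n]) (use i v_def in auto)
  qed
  moreover have "adj n v (x + unit_vec n (-2))"
    by (rule adj_add_unit_vecI[of _ _ j t])
      (use j_index t x_eq v_def in \<open>auto simp: fun_eq_iff\<close>)
  ultimately show False using layer_2_not_adj_code code by blast
qed

lemma off_axis_extension_not_in_code:
  assumes k: "k \<in> {1..n}" "k \<noteq> i" "k \<noteq> j" and \<sigma>: "\<bar>\<sigma>\<bar> = 1"
    and not_minus_en: "\<not> (k = n \<and> \<sigma> = -1)"
  shows "x + unit_vec k (2 * \<sigma>) \<notin> C"
proof
  \<comment> \<open>y lies two steps beyond x' = s e_i + \<sigma> e_k along two different coordinates,
    which gives x' four neighbours in C_1.\<close>
  define y where "y = x + unit_vec k (2 * \<sigma>)"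
  assume "x + unit_vec k (2 * \<sigma>) \<in> C"
  then have y_code: "y \<in> C" unfolding y_def .
  define x' where "x' = unit_vec i s + unit_vec k \<sigma>"
  define w where "w = x' + unit_vec j t"
  define q where "q = x' + unit_vec k \<sigma>"
  have x'_vtx: "x' \<in> vtx n"
    unfolding x'_def using i_index k(1) by (intro vtx_add_unit_vec unit_vec_in_vtx)
  have x'_layer: "x' \<in> layer n C 2"
    unfolding x'_def by (rule unit_vec_sum_in_layer_2[OF i s k(1,2) \<sigma> not_minus_en])
  have adj_i: "adj n x' (unit_vec i s)"
    by (rule adj_add_unit_vecI[of _ _ k "-\<sigma>"]) (use k \<sigma> x'_def in \<open>auto simp: fun_eq_iff\<close>)
  have adj_k: "adj n x' (unit_vec k \<sigma>)"
    by (rule adj_add_unit_vecI[of _ _ i "-s"]) (use i_index s x'_def in \<open>auto simp: fun_eq_iff\<close>)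
  have adj_w: "adj n x' w" unfolding w_def by (rule adj_add_unit_vecI[OF refl j_index t])
  have adj_q: "adj n x' q" unfolding q_def by (rule adj_add_unit_vecI[OF refl k(1) \<sigma>])
  have y_via_w: "y = w + unit_vec k \<sigma>" and y_via_q: "y = q + unit_vec j t"
    unfolding y_def w_def q_def x'_def x_eq by (auto simp: fun_eq_iff)
  have w_layer: "w \<in> layer n C 1"
    using code_midpoint_in_layer_1[OF x'_layer y_code vtx_add_unit_vec[OF x'_vtx j_index]]
      adj_w adj_commute adj_add_unit_vecI[OF y_via_w k(1) \<sigma>] w_def by blast
  have q_layer: "q \<in> layer n C 1"
    using code_midpoint_in_layer_1[OF x'_layer y_code vtx_add_unit_vec[OF x'_vtx k(1)]]
      adj_q adj_commute adj_add_unit_vecI[OF y_via_q j_index t] q_def by blast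
  have k_layer: "unit_vec k \<sigma> \<in> layer n C 1"
    by (rule unit_vec_in_layer_1[OF k(1) \<sigma> not_minus_en])
  show False
  proof (rule layer_2_no_four_layer_1_neighbours[OF x'_layer unit_vecs_in_layer_1(1) k_layer
        w_layer q_layer adj_i adj_k adj_w adj_q])
    show "unit_vec i s \<noteq> unit_vec k \<sigma>" by (rule fun_neq_at[of _ i]) (use k s in auto)
    show "unit_vec i s \<noteq> w" by (rule fun_neq_at[of _ j]) (use k t i_neq_j w_def x'_def in auto)
    show "unit_vec i s \<noteq> q" by (rule fun_neq_at[of _ k]) (use k \<sigma> q_def x'_def in auto)
    show "unit_vec k \<sigma> \<noteq> w" by (rule fun_neq_at[of _ i]) (use k s w_def x'_def i_neq_j in auto)
    show "unit_vec k \<sigma> \<noteq> q" by (rule fun_neq_at[of _ i]) (use k s q_def x'_def in auto)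
    show "w \<noteq> q" by (rule fun_neq_at[of _ j]) (use k t i_neq_j w_def q_def x'_def in auto)
  qed
qed

lemma code_word_beyond_third_neighbour:
  assumes "y \<in> C" "w \<in> vtx n" "adj n x w" "adj n w y"
    and "w \<noteq> unit_vec i s" "w \<noteq> unit_vec j t"
  shows "y = unit_vec i (3 * s) + unit_vec j t \<or> y = unit_vec i s + unit_vec j (3 * t)"
proof -
  obtain k \<sigma> where k: "k \<in> {1..n}" and \<sigma>: "\<bar>\<sigma>\<bar> = 1"
    and w_eq: "w = x + unit_vec k \<sigma>" and y_eq: "y = x + unit_vec k (2 * \<sigma>)"
    using code_word_beyond_third_neighbour_straight[OF assms] .
  consider "k = i" | "k = j" | "k \<noteq> i" "k \<noteq> j" by blast
  then show ?thesis
  proof cases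
    case 1
    have "\<sigma> = s"
    proof (rule ccontr)
      assume "\<sigma> \<noteq> s"
      then have "w = unit_vec j t" using \<sigma> s 1 unfolding w_eq x_eq by (auto simp: fun_eq_iff)
      then show False using assms(6) by simp
    qed
    then show ?thesis using 1 unfolding y_eq x_eq by (auto simp: fun_eq_iff)
  next
    case 2
    have "\<sigma> = t"
    proof (rule ccontr)
      assume "\<sigma> \<noteq> t"
      then have "w = unit_vec i s" using \<sigma> t 2 unfolding w_eq x_eq by (auto simp: fun_eq_iff)
      then show False using assms(5) by simp
    qed
    then show ?thesis using 2 i_neq_j unfolding y_eq x_eq by (auto simp: fun_eq_iff)
  next
    case 3
    show ?thesis
    proof (cases "k = n \<and> \<sigma> = -1")
      case True
      then show ?thesis using minus_en_extension_not_in_code assms(1) y_eq by simp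
    next
      case False
      then show ?thesis using off_axis_extension_not_in_code[OF k 3 \<sigma>] assms(1) y_eq by simp
    qed
  qed
qed

lemma not_both_type3100_in_code:
  "\<not> (unit_vec i (3 * s) + unit_vec j t \<in> C \<and> unit_vec i s + unit_vec j (3 * t) \<in> C)"
proof
  assume both: "unit_vec i (3 * s) + unit_vec j t \<in> C \<and> unit_vec i s + unit_vec j (3 * t) \<in> C"
  define a where "a = x + unit_vec i s"
  define b where "b = x + unit_vec j t"
  have adj_a: "adj n x a" unfolding a_def by (rule adj_add_unit_vecI[OF refl i_index s])
  have adj_b: "adj n x b" unfolding b_def by (rule adj_add_unit_vecI[OF refl j_index t])
  have "adj n a (unit_vec i (3 * s) + unit_vec j t)"
    by (rule adj_add_unit_vecI[of _ _ i s]) (use i_index s a_def x_eq in \<open>auto simp: fun_eq_iff\<close>)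
  then have a_layer: "a \<in> layer n C 1"
    using code_midpoint_in_layer_1[OF weight_two_in_layer_2 _
        vtx_add_unit_vec[OF weight_two_in_vtx i_index]]
      both adj_a adj_commute a_def by blast
  have "adj n b (unit_vec i s + unit_vec j (3 * t))"
    by (rule adj_add_unit_vecI[of _ _ j t]) (use j_index t b_def x_eq in \<open>auto simp: fun_eq_iff\<close>)
  then have b_layer: "b \<in> layer n C 1"
    using code_midpoint_in_layer_1[OF weight_two_in_layer_2 _
        vtx_add_unit_vec[OF weight_two_in_vtx j_index]]
      both adj_b adj_commute b_def by blast
  show False
  proof (rule layer_2_no_four_layer_1_neighbours[OF weight_two_in_layer_2 unit_vecs_in_layer_1
        a_layer b_layer adj_weight_two_unit_vecs adj_a adj_b unit_vecs_distinct])
    show "unit_vec i s \<noteq> a" by (rule fun_neq_at[of _ i]) (use i_neq_j s a_def x_eq in auto)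
    show "unit_vec i s \<noteq> b" by (rule fun_neq_at[of _ j]) (use i_neq_j t b_def x_eq in auto)
    show "unit_vec j t \<noteq> a" by (rule fun_neq_at[of _ i]) (use i_neq_j s a_def x_eq in auto)
    show "unit_vec j t \<noteq> b" by (rule fun_neq_at[of _ j]) (use i_neq_j t b_def x_eq in auto)
    show "a \<noteq> b" by (rule fun_neq_at[of _ i]) (use i_neq_j s a_def b_def x_eq in auto)
  qed
qed

lemma unique_type3100_at_distance_2:
  "\<exists>!y. y \<in> C \<and> type3100 n y \<and> y n = 0 \<and> gdist n x y = 2"
proof -
  define A where "A = unit_vec i (3 * s) + unit_vec j t"
  define B where "B = unit_vec i s + unit_vec j (3 * t)"
  have A: "type3100 n A \<and> A n = 0 \<and> gdist n x A = 2"
  proof (intro conjI)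
    show "type3100 n A" unfolding A_def
      by (rule type3100_unit_vec_sumI) (use i_index j_index i_neq_j s t in auto)
    show "A n = 0" using i j A_def by simp
    have "A = x + unit_vec i (2 * s)" using x_eq A_def by (auto simp: fun_eq_iff)
    then show "gdist n x A = 2" using gdist_add_unit_vec[OF i_index, of x "2 * s"] s by simp
  qed
  have B: "type3100 n B \<and> B n = 0 \<and> gdist n x B = 2"
  proof (intro conjI)
    show "type3100 n B" unfolding B_def add.commute[of "unit_vec i s"]
      by (rule type3100_unit_vec_sumI) (use i_index j_index i_neq_j s t in auto)
    show "B n = 0" using i j B_def by simp
    have "B = x + unit_vec j (2 * t)" using x_eq B_def by (auto simp: fun_eq_iff)
    then show "gdist n x B = 2" using gdist_add_unit_vec[OF j_index, of x "2 * t"] t by simp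
  qed
  have candidates: "y = A \<or> y = B" if y: "y \<in> C" "type3100 n y" "gdist n x y = 2" for y
  proof -
    obtain w where w: "w \<in> vtx n" "adj n x w" "adj n w y"
      using gdist_2_imp_midpoint[OF weight_two_in_vtx _ y(3)] y(1) code_subset_vtx by blast
    have "y \<noteq> 0" using y(2) unfolding type3100_def by auto
    then have "w \<noteq> unit_vec i s" "w \<noteq> unit_vec j t"
      using unit_vec_code_neighbour[OF i_index s y(1)] unit_vec_code_neighbour[OF j_index t y(1)]
        w(3)
      by auto
    then show ?thesis using code_word_beyond_third_neighbour[OF y(1) w] A_def B_def by blast
  qed
  obtain w where w: "w \<in> layer n C 1" "adj n x w" "w \<noteq> unit_vec i s" "w \<noteq> unit_vec j t"
    by (rule layer_2_third_layer_1_neighbour[OF weight_two_in_layer_2])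
  obtain y0 where y0: "y0 \<in> C" "adj n w y0"
    by (rule layer_1_code_neighbour[OF w(1)])
  have y0_AB: "y0 = A \<or> y0 = B"
    using code_word_beyond_third_neighbour[OF y0(1) _ w(2) y0(2) w(3,4)] layerD[OF w(1)] A_def B_def
    by blast
  show ?thesis
  proof (rule ex1I[of _ y0])
    show "y0 \<in> C \<and> type3100 n y0 \<and> y0 n = 0 \<and> gdist n x y0 = 2" using y0_AB y0(1) A B by auto
  next
    fix y assume "y \<in> C \<and> type3100 n y \<and> y n = 0 \<and> gdist n x y = 2"
    then show "y = y0"
      using candidates y0_AB y0(1) not_both_type3100_in_code A_def B_def by blast
  qed
qed

end

lemma type1100_in_layer_2_unique_type3100:
  assumes "type1100 n x" "x n = 0"
  shows "x \<in> layer n C 2 \<and> (\<exists>!y. y \<in> C \<and> type3100 n y \<and> y n = 0 \<and> gdist n x y = 2)"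
proof -
  obtain i j s t where ij: "i \<in> {1..n}" "j \<in> {1..n}" "i \<noteq> j" and st: "\<bar>s\<bar> = 1" "\<bar>t\<bar> = 1"
    and x_eq: "x = unit_vec i s + unit_vec j t"
    by (rule type1100_unit_vec_sum[OF assms(1)])
  have "i \<noteq> n" "j \<noteq> n" using assms(2) ij(3) st unfolding x_eq by auto
  then have "1 \<le> i" "i < n" "1 \<le> j" "j < n" using ij by auto
  note weight_two = this ij(3) st x_eq
  show ?thesis
    using weight_two_in_layer_2[OF weight_two] unique_type3100_at_distance_2[OF weight_two] by blast
qed

lemma type3100_slice0_code_word_in_cap:
  assumes "y \<in> C" "type3100 n y" "y \<in> slice0 n"
  obtains p \<epsilon> where "p \<in> {1..n - 1}" "\<epsilon> \<in> {1, -1}" "y \<in> cap n p \<epsilon>"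
proof -
  obtain p q a b where pq: "p \<in> {1..n}" "q \<in> {1..n}" "p \<noteq> q" and ab: "\<bar>a\<bar> = 3" "\<bar>b\<bar> = 1"
    and y_eq: "y = unit_vec p a + unit_vec q b"
    by (rule type3100_unit_vec_sum[OF assms(2)])
  have y_n: "y n = 0 \<or> y n = -1" using assms(3) unfolding slice0_def by auto
  have p_n: "p \<noteq> n" using y_n pq(3) ab unfolding y_eq by auto
  define \<epsilon> where "\<epsilon> = sgn a"
  have \<epsilon>: "\<epsilon> \<in> {1, -1}" "\<bar>\<epsilon>\<bar> = 1" and a_eq: "a = 3 * \<epsilon>"
    using ab(1) unfolding \<epsilon>_def by (auto simp: sgn_if)
  have "q \<noteq> n"
    \<comment> \<open>otherwise y = 3 \<epsilon> e_p - e_n is adjacent to the C_2-vertex 2 \<epsilon> e_p - e_n\<close>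
  proof
    assume q_n: "q = n"
    then have b_eq: "b = -1" using y_n pq(3) ab(2) unfolding y_eq by auto
    have p: "1 \<le> p" "p < n" using pq(1) p_n by auto
    define v where "v = unit_vec p (2 * \<epsilon>) + unit_vec n (-1)"
    have "v \<in> layer n C 2"
    proof (rule unit_vec_minus_en_neighbour_in_layer_2[OF p \<epsilon>(2)])
      show "v \<in> vtx n" unfolding v_def
        using pq(1) n_index by (intro vtx_add_unit_vec unit_vec_in_vtx)
      show "adj n (unit_vec p \<epsilon> + unit_vec n (-1)) v"
        by (rule adj_add_unit_vecI[of _ _ p \<epsilon>]) (use pq(1) \<epsilon>(2) v_def in \<open>auto simp: fun_eq_iff\<close>)
      show "v \<noteq> unit_vec n (-1)" by (rule fun_neq_at[of _ p]) (use p_n \<epsilon>(2) v_def in auto)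
      show "v \<noteq> unit_vec p \<epsilon>" by (rule fun_neq_at[of _ n]) (use p_n v_def in auto)
    qed
    moreover have "adj n v y"
      by (rule adj_add_unit_vecI[of _ _ p \<epsilon>])
        (use pq(1) \<epsilon>(2) v_def y_eq q_n b_eq a_eq in \<open>auto simp: fun_eq_iff\<close>)
    ultimately show False using layer_2_not_adj_code assms(1) by blast
  qed
  then have "y \<in> cap n p \<epsilon>"
    unfolding y_eq a_eq using pq ab(2) \<epsilon>(1) by (intro unit_vec_sum_in_cap) auto
  moreover have "p \<in> {1..n - 1}" using pq(1) p_n by auto
  ultimately show thesis using that \<epsilon>(1) by blast
qed

lemma card_type3100_slice0_le: "card {y \<in> C. type3100 n y \<and> y \<in> slice0 n} \<le> 2 * (n - 1)"
proof -
  let ?I = "{1..n - 1} \<times> {1::int, -1}"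
  let ?A = "\<lambda>(p, \<epsilon>). C \<inter> cap n p \<epsilon>"
  have "{y \<in> C. type3100 n y \<and> y \<in> slice0 n} \<subseteq> (\<Union>p\<in>?I. ?A p)"
  proof
    fix y assume "y \<in> {y \<in> C. type3100 n y \<and> y \<in> slice0 n}"
    then have y: "y \<in> C" "type3100 n y" "y \<in> slice0 n" by simp_all
    obtain p \<epsilon> where "p \<in> {1..n - 1}" "\<epsilon> \<in> {1, -1}" "y \<in> cap n p \<epsilon>"
      by (rule type3100_slice0_code_word_in_cap[OF y])
    with y(1) show "y \<in> (\<Union>p\<in>?I. ?A p)" by blast
  qed
  moreover have "finite (\<Union>p\<in>?I. ?A p)" by (auto simp: finite_cap)
  ultimately have "card {y \<in> C. type3100 n y \<and> y \<in> slice0 n} \<le> card (\<Union>p\<in>?I. ?A p)"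
    by (intro card_mono)
  also have "\<dots> \<le> (\<Sum>p\<in>?I. card (?A p))" by (rule card_UN_le) simp
  also have "\<dots> \<le> (\<Sum>p\<in>?I. 1)"
    by (rule sum_mono) (use card_code_inter_cap_le_1 in auto)
  also have "\<dots> = 2 * (n - 1)" by simp
  finally show ?thesis .
qed

end

theorem mainTheorem11:
  fixes n \<rho> :: nat and C :: "(nat \<Rightarrow> int) set" and \<alpha> :: "nat \<Rightarrow> nat \<Rightarrow> nat"
  assumes "n \<ge> 2"
    and "CRC n C \<rho> \<alpha>"
    and "all_ones \<rho> \<alpha>"
    and "\<rho> \<ge> 2"
    and "\<alpha> 1 0 = 1"
    and "\<alpha> 2 1 = 3"
    and "(\<lambda>k. 0) \<in> C"
    and "(\<lambda>k. - unitv n k) \<in> C"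
  shows "(\<forall>i \<in> {1..n}. \<forall>\<epsilon> \<in> {1, -1}. card (C \<inter> cap n i \<epsilon> \<inter> slice0 n) \<le> 1)
       \<and> card {x \<in> C. type3100 n x \<and> x \<in> slice0 n} \<le> 2 * (n - 1)
       \<and> (\<forall>x. type1100 n x \<and> x n = 0 \<longrightarrow>
             x \<in> layer n C 2 \<and>
             (\<exists>!y. y \<in> C \<and> type3100 n y \<and> y n = 0 \<and> gdist n x y = 2))"
proof -
  have "(\<lambda>k. - unitv n k) = unit_vec n (-1)" by (auto simp: fun_eq_iff unitv_def)
  then interpret all_ones_crc_at_origin n \<rho> C \<alpha>
    by unfold_locales (use assms in \<open>auto simp: zero_fun_def\<close>)
  have "card (C \<inter> cap n i \<epsilon> \<inter> slice0 n) \<le> 1" if "i \<in> {1..n}" for i \<epsilon>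
  proof -
    have "card (C \<inter> cap n i \<epsilon> \<inter> slice0 n) \<le> card (C \<inter> cap n i \<epsilon>)"
      by (intro card_mono) (auto simp: finite_cap)
    also have "\<dots> \<le> 1" using card_code_inter_cap_le_1[OF that] .
    finally show ?thesis .
  qed
  then show ?thesis
    using card_type3100_slice0_le type1100_in_layer_2_unique_type3100 by blast
qed

end
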